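(* Let $K,N\ge 1$, $T\ge1$, let $c_1^M,\dots,c_K^M>0$ with $C^M=\sum_kc_k^M$, and let $\mathcal{F}_c=\{c\in\mathbb{R}^N: c\ge 0,\ \sum_{i=1}^Nc_i\le C^M\}$. For each round $t=1,\dots,T$ let (possibly adversarially chosen) data $r_1(t)<\dots<r_K(t)$ with $0\le r_k(t)\le r_{\max}$, prices $0\le p_i(t)<p_{\max}$, and deployment ratios $\epsilon(t)\in[0,1]^N$ be given, and define for $c\in\mathcal{F}_c$ $$\mathrm{cost}_t(c)=\sum_{k<k_c}(r_k(t)-r_{k_c}(t))c_k^M+\sum_{i=1}^Nc_i\big(r_{k_c}(t)\epsilon_i(t)-p_i(t)\big),$$ where $k_c=\min\{q:\sum_i\epsilon_i(t)c_i\le\sum_{k=1}^qc_k^M\}$. Let $D=C^M$ if $N=1$ and $D=\sqrt2\,C^M$ if $N\ge2$, and $G=\sqrt N\max\{r_{\max},p_{\max}\}$. Run online projected subgradient descent: $c(1)\in\mathcal{F}_c$ arbitrary and $c(t+1)=\mathrm{proj}_{\mathcal{F}_c}\big(c(t)-\eta_t g_t\big)$ with $g_t=\big(r_{k_c}(t)\epsilon_i(t)-p_i(t)\big)_{i=1}^N$ (the critical type $k_c$ evaluated at $c(t)$), $\eta_t=\frac{D}{G\sqrt t}$, where $\mathrm{proj}_{\mathcal{F}_c}$ is Euclidean projection and $c(t)$ is chosen before round-$t$ data are revealed. Then the regret $$R_T=\sum_{t=1}^T\mathrm{cost}_t(c(t))-\min_{c\in\mathcal{F}_c}\sum_{t=1}^T\mathrm{cost}_t(c)$$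 satisfies $R_T\le\frac32GD\sqrt T\le 3C^M\sqrt{\frac{TN}{2}}\max\{r_{\max},p_{\max}\}$.
   Context: Interpretation: a cryptominer with $K$ machine types (capacities $c_k^M$, per-unit net mining rewards $r_k(t)$) chooses each round capacities $c_i(t)$ committed to $N$ ancillary service programs with prices $p_i(t)$ and deployment ratios $\epsilon_i(t)$; $\mathrm{cost}_t$ is its optimal net cost in round $t$, and $g_t$ is a subgradient of $\mathrm{cost}_t$ at $c(t)$. *)

theory Defs
  imports "HOL-Analysis.Analysis"
begin

definition feasible :: "real \<Rightarrow> (real^'n) set" where
  "feasible CM = {c. (\<forall>i. 0 \<le> c $ i) \<and> (\<Sum>i\<in>UNIV. c $ i) \<le> CM}"

definition crit :: "(nat \<Rightarrow> real) \<Rightarrow> real^'n \<Rightarrow> real^'n \<Rightarrow> nat" where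
  "crit cM eps c = (LEAST q. 1 \<le> q \<and> (\<Sum>i\<in>UNIV. eps $ i * c $ i) \<le> (\<Sum>k=1..q. cM k))"

definition cost :: "(nat \<Rightarrow> real) \<Rightarrow> (nat \<Rightarrow> real) \<Rightarrow> real^'n \<Rightarrow> real^'n \<Rightarrow> real^'n \<Rightarrow> real" where
  "cost cM r eps p c =
     (let q = crit cM eps c in
        (\<Sum>k\<in>{1..<q}. (r k - r q) * cM k) + (\<Sum>i\<in>UNIV. c $ i * (r q * eps $ i - p $ i)))"

definition subgrad :: "(nat \<Rightarrow> real) \<Rightarrow> (nat \<Rightarrow> real) \<Rightarrow> real^'n \<Rightarrow> real^'n \<Rightarrow> real^'n \<Rightarrow> real^'n" where
  "subgrad cM r eps p c = (\<chi> i. r (crit cM eps c) * eps $ i - p $ i)"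

end

theory Submission
  imports Defs
begin

text \<open>Write s(c) for the deployed capacity \<Sum>i. eps_i c_i. For every machine type j the expression
  \<Sum>k<j. (r_k - r_j) cM_k + r_j s(c) - p \<bullet> c is affine in c, it equals cost_t(c) at the critical
  type j = k_c, and k_c maximises it over all j. Hence cost_t is convex with subgradient g_t at c(t),
  and the regret against x is at most \<Sum>t. g_t \<bullet> (c(t) - x). This is bounded as in Zinkevich's
  analysis of online gradient descent: projection onto the convex set F_c is nonexpansive, so
  g_t \<bullet> (c(t) - x) \<le> (|c(t) - x|^2 - |c(t+1) - x|^2) / (2 \<eta>_t) + \<eta>_t G^2 / 2. As 1/\<eta>_t
  increases and F_c has diameter at most D, the first terms sum to at most G D \<surd>T / 2, and
  \<Sum>t. 1/\<surd>t \<le> 2 \<surd>T bounds the sum of the second terms by G D \<surd>T.\<close>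

lemma sum_inverse_sqrt_le: "(\<Sum>t=1..T. 1 / sqrt (real t)) \<le> 2 * sqrt (real T)"
proof (induction T)
  case (Suc n)
  have "0 \<le> (sqrt (Suc n) - sqrt n)\<^sup>2"
    by simp
  then have "1 / sqrt (Suc n) \<le> 2 * (sqrt (Suc n) - sqrt n)"
    by (simp add: power2_eq_square field_simps)
  with Suc show ?case by simp
qed simp

lemma weighted_telescoping_le:
  fixes w d e :: "nat \<Rightarrow> real"
  assumes "1 \<le> T"
    and w_nonneg: "\<And>t. t \<in> {1..T} \<Longrightarrow> 0 \<le> w t"
    and w_mono: "\<And>t. t \<in> {1..<T} \<Longrightarrow> w t \<le> w (Suc t)"
    and d_le: "\<And>t. t \<in> {1..T} \<Longrightarrow> d t \<le> M"
    and e_nonneg: "\<And>t. t \<in> {1..T} \<Longrightarrow> 0 \<le> e t"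
    and d_Suc_le: "\<And>t. t \<in> {1..<T} \<Longrightarrow> d (Suc t) \<le> e t"
  shows "(\<Sum>t=1..T. w t * (d t - e t)) \<le> M * w T"
proof -
  have "(\<Sum>t=1..n. w t * (d t - e t)) + w n * e n \<le> M * w n" if "1 \<le> n" "n \<le> T" for n
    using that
  proof (induction n rule: dec_induct)
    case base
    then show ?case using d_le[of 1] w_nonneg[of 1] by (simp add: algebra_simps mult_right_mono)
  next
    case (step n)
    have "w n * d (Suc n) \<le> w n * e n"
      using step by (intro mult_left_mono d_Suc_le w_nonneg) auto
    moreover have "(w (Suc n) - w n) * d (Suc n) \<le> (w (Suc n) - w n) * M"
      using step by (intro mult_left_mono d_le) (auto simp: w_mono)
    ultimately show ?case using step by (simp add: algebra_simps)
  qed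
  moreover have "0 \<le> w T * e T"
    using assms(1) e_nonneg[of T] w_nonneg[of T] by simp
  ultimately show ?thesis
    using assms(1) by fastforce
qed

lemma inner_eq_descent_step:
  fixes u g :: "'a::real_inner"
  assumes "\<eta> \<noteq> 0"
  shows "g \<bullet> u = ((norm u)\<^sup>2 - (norm (u - \<eta> *\<^sub>R g))\<^sup>2) / (2 * \<eta>) + \<eta> / 2 * (norm g)\<^sup>2"
  unfolding power2_norm_eq_inner
  using assms by (simp add: inner_diff_left inner_diff_right inner_commute field_simps)

lemma closest_point_iterates_in:
  assumes "closed F" and "c 1 \<in> F"
    and step: "\<And>t. t \<in> {1..<T} \<Longrightarrow> c (Suc t) = closest_point F (y t)"
  shows "t \<in> {1..T} \<Longrightarrow> c t \<in> F"
proof (induction t)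
  case (Suc t)
  then show ?case
    using assms closest_point_in_set[of F] by (cases "t = 0") auto
qed simp

lemma projected_subgradient_linearized_regret_le:
  fixes c g :: "nat \<Rightarrow> 'a::{real_inner,heine_borel}"
  assumes F: "convex F" "closed F" and x: "x \<in> F"
    and G: "0 < G" and D: "0 < D" and T: "1 \<le> T"
    and c_in: "\<And>t. t \<in> {1..T} \<Longrightarrow> c t \<in> F"
    and g_le: "\<And>t. t \<in> {1..T} \<Longrightarrow> norm (g t) \<le> G"
    and diam: "\<And>y z. y \<in> F \<Longrightarrow> z \<in> F \<Longrightarrow> dist y z \<le> D"
    and step: "\<And>t. t \<in> {1..<T} \<Longrightarrow> c (Suc t) = closest_point F (c t - (D / (G * sqrt (real t))) *\<^sub>R g t)"
  shows "(\<Sum>t=1..T. g t \<bullet> (c t - x)) \<le> 3/2 * G * D * sqrt (real T)"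
proof -
  define \<eta> where "\<eta> t = D / (G * sqrt (real t))" for t :: nat
  define d where "d t = (norm (c t - x))\<^sup>2" for t
  define e where "e t = (norm (c t - x - \<eta> t *\<^sub>R g t))\<^sup>2" for t
  have inner_le: "g t \<bullet> (c t - x) \<le> G / (2 * D) * (sqrt t * (d t - e t)) + D * G / 2 * (1 / sqrt t)"
    if t: "t \<in> {1..T}" for t
  proof -
    have "0 < \<eta> t" using t G D by (simp add: \<eta>_def)
    then have "g t \<bullet> (c t - x) = (d t - e t) / (2 * \<eta> t) + \<eta> t / 2 * (norm (g t))\<^sup>2"
      unfolding d_def e_def by (intro inner_eq_descent_step) simp
    also have "\<dots> \<le> (d t - e t) / (2 * \<eta> t) + \<eta> t / 2 * G\<^sup>2"
      using \<open>0 < \<eta> t\<close> g_le[OF t] by (simp add: power_mono)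
    also have "\<dots> = G / (2 * D) * (sqrt t * (d t - e t)) + D * G / 2 * (1 / sqrt t)"
      using t G D by (simp add: \<eta>_def field_simps power2_eq_square)
    finally show ?thesis .
  qed
  have d_Suc_le: "d (Suc t) \<le> e t" if "t \<in> {1..<T}" for t
  proof -
    have "dist (c (Suc t)) (closest_point F x) \<le> dist (c t - \<eta> t *\<^sub>R g t) x"
      using step[OF that] F x by (auto simp: \<eta>_def intro: closest_point_lipschitz)
    then show ?thesis
      by (simp add: d_def e_def closest_point_self[OF x] dist_norm algebra_simps power_mono)
  qed
  have d_le: "d t \<le> D\<^sup>2" if "t \<in> {1..T}" for t
    using diam[OF c_in[OF that] x] by (simp add: d_def dist_norm power_mono)
  have "(\<Sum>t=1..T. g t \<bullet> (c t - x))
      \<le> (\<Sum>t=1..T. G / (2 * D) * (sqrt t * (d t - e t)) + D * G / 2 * (1 / sqrt t))"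
    by (intro sum_mono inner_le)
  also have "\<dots> = G / (2 * D) * (\<Sum>t=1..T. sqrt t * (d t - e t)) + D * G / 2 * (\<Sum>t=1..T. 1 / sqrt t)"
    by (simp add: sum.distrib sum_distrib_left)
  also have "\<dots> \<le> G / (2 * D) * (D\<^sup>2 * sqrt T) + D * G / 2 * (2 * sqrt T)"
    using G D T d_le d_Suc_le
    by (intro add_mono mult_left_mono weighted_telescoping_le sum_inverse_sqrt_le) (auto simp: e_def)
  also have "\<dots> = 3/2 * G * D * sqrt T"
    using D by (simp add: field_simps power2_eq_square)
  finally show ?thesis .
qed

lemma projected_subgradient_descent_regret_le:
  fixes c g :: "nat \<Rightarrow> 'a::{real_inner,heine_borel}"
  assumes F: "convex F" "closed F" "F \<noteq> {}"
    and G: "0 < G" and D: "0 < D" and T: "1 \<le> T"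
    and c_in: "\<And>t. t \<in> {1..T} \<Longrightarrow> c t \<in> F"
    and g_le: "\<And>t. t \<in> {1..T} \<Longrightarrow> norm (g t) \<le> G"
    and subgradient: "\<And>t x. t \<in> {1..T} \<Longrightarrow> x \<in> F \<Longrightarrow> f t (c t) + g t \<bullet> (x - c t) \<le> f t x"
    and diam: "\<And>y z. y \<in> F \<Longrightarrow> z \<in> F \<Longrightarrow> dist y z \<le> D"
    and step: "\<And>t. t \<in> {1..<T} \<Longrightarrow> c (Suc t) = closest_point F (c t - (D / (G * sqrt (real t))) *\<^sub>R g t)"
  shows "(\<Sum>t=1..T. f t (c t)) - (INF x\<in>F. \<Sum>t=1..T. f t x) \<le> 3/2 * G * D * sqrt (real T)"
proof -
  have "(\<Sum>t=1..T. f t (c t)) - 3/2 * G * D * sqrt T \<le> (\<Sum>t=1..T. f t x)" if x: "x \<in> F" for x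
  proof -
    have "f t (c t) - f t x \<le> g t \<bullet> (c t - x)" if "t \<in> {1..T}" for t
      using subgradient[OF that x] by (simp add: inner_diff_right)
    then have "(\<Sum>t=1..T. f t (c t)) - (\<Sum>t=1..T. f t x) \<le> (\<Sum>t=1..T. g t \<bullet> (c t - x))"
      unfolding sum_subtractf[symmetric] by (intro sum_mono)
    also have "\<dots> \<le> 3/2 * G * D * sqrt T"
      using F(1,2) x G D T c_in g_le diam step by (rule projected_subgradient_linearized_regret_le)
    finally show ?thesis by simp
  qed
  then have "(\<Sum>t=1..T. f t (c t)) - 3/2 * G * D * sqrt T \<le> (INF x\<in>F. \<Sum>t=1..T. f t x)"
    using F(3) by (intro cINF_greatest)
  then show ?thesis by simp
qed

lemma norm_le_sqrt_card_mult:
  fixes v :: "real^'n"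
  assumes "\<And>i. \<bar>v $ i\<bar> \<le> m"
  shows "norm v \<le> sqrt CARD('n) * m"
proof -
  have "norm v \<le> L2_set (\<lambda>i::'n. m) UNIV"
    unfolding norm_vec_def by (intro L2_set_mono) (use assms in auto)
  also have "\<dots> = sqrt CARD('n) * m"
    using assms[of undefined] by (simp add: L2_set_constant)
  finally show ?thesis .
qed

lemma feasible_nonneg: "x \<in> feasible CM \<Longrightarrow> 0 \<le> x $ i"
  by (simp add: feasible_def)

lemma feasible_closed: "closed (feasible CM :: (real^'n) set)"
  unfolding feasible_def by (intro closed_Collect_conj closed_Collect_all closed_Collect_le continuous_intros)

lemma feasible_convex: "convex (feasible CM :: (real^'n) set)"
  unfolding feasible_def convex_def
  by (auto simp: sum.distrib sum_distrib_left[symmetric] intro!: add_nonneg_nonneg convex_bound_le)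

lemma feasible_component_le:
  assumes "x \<in> feasible CM"
  shows "x $ i \<le> CM"
proof -
  have "x $ i \<le> (\<Sum>j\<in>UNIV. x $ j)"
    using assms by (intro member_le_sum) (auto simp: feasible_def)
  then show ?thesis using assms by (simp add: feasible_def)
qed

lemma norm_feasible_le: "x \<in> feasible CM \<Longrightarrow> norm x \<le> CM"
  using norm_le_l1_cart[of x] by (simp add: feasible_def)

lemma dist_feasible_le_sqrt2:
  assumes x: "x \<in> feasible CM" and y: "y \<in> feasible CM"
  shows "dist x y \<le> sqrt 2 * CM"
proof -
  have "0 \<le> x \<bullet> y"
    using x y by (auto simp: inner_vec_def feasible_def intro: sum_nonneg)
  then have "(norm (x - y))\<^sup>2 \<le> (norm x)\<^sup>2 + (norm y)\<^sup>2"
    by (simp add: power2_norm_eq_inner inner_diff_left inner_diff_right inner_commute)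
  also have "\<dots> \<le> 2 * CM\<^sup>2"
    using power_mono[OF norm_feasible_le[OF x], of 2] power_mono[OF norm_feasible_le[OF y], of 2]
    by simp
  finally have "norm (x - y) \<le> sqrt (2 * CM\<^sup>2)"
    by (rule real_le_rsqrt)
  moreover have "0 \<le> CM" using norm_feasible_le[OF x] norm_ge_zero order_trans by blast
  ultimately show ?thesis by (simp add: dist_norm real_sqrt_mult)
qed

lemma dist_feasible_le_CARD_1:
  assumes "CARD('n) = 1" and x: "x \<in> feasible CM" and y: "(y :: real^'n) \<in> feasible CM"
  shows "dist x y \<le> CM"
proof -
  obtain i :: 'n where i: "UNIV = {i}"
    using card_1_singletonE[OF assms(1)] by metis
  have "dist x y \<le> (\<Sum>j\<in>UNIV. \<bar>x $ j - y $ j\<bar>)"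
    using norm_le_l1_cart[of "x - y"] by (simp add: dist_norm)
  also have "\<dots> = \<bar>x $ i - y $ i\<bar>"
    by (simp add: i)
  also have "\<dots> \<le> CM"
    using feasible_nonneg[OF x, of i] feasible_component_le[OF x, of i]
      feasible_nonneg[OF y, of i] feasible_component_le[OF y, of i] by linarith
  finally show ?thesis .
qed

lemma feasible_weighted_sum_le:
  assumes "x \<in> feasible CM" and "\<And>i. 0 \<le> eps $ i \<and> eps $ i \<le> 1"
  shows "(\<Sum>i\<in>UNIV. eps $ i * x $ i) \<le> CM"
proof -
  have "(\<Sum>i\<in>UNIV. eps $ i * x $ i) \<le> (\<Sum>i\<in>UNIV. x $ i)"
    using assms by (intro sum_mono mult_left_le_one_le) (auto simp: feasible_nonneg)
  also have "\<dots> \<le> CM" using assms(1) by (simp add: feasible_def)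
  finally show ?thesis .
qed

lemma
  fixes eps x :: "real^'n"
  assumes "1 \<le> K" and "(\<Sum>i\<in>UNIV. eps $ i * x $ i) \<le> (\<Sum>k=1..K. cM k)"
  shows crit_ge_1: "1 \<le> crit cM eps x"
    and crit_le: "crit cM eps x \<le> K"
    and weighted_sum_le_crit: "(\<Sum>i\<in>UNIV. eps $ i * x $ i) \<le> (\<Sum>k=1..crit cM eps x. cM k)"
    and crit_minimal: "1 \<le> j \<Longrightarrow> j < crit cM eps x \<Longrightarrow> (\<Sum>k=1..j. cM k) < (\<Sum>i\<in>UNIV. eps $ i * x $ i)"
proof -
  let ?P = "\<lambda>q. 1 \<le> q \<and> (\<Sum>i\<in>UNIV. eps $ i * x $ i) \<le> (\<Sum>k=1..q. cM k)"
  have "?P K" using assms by simp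
  then have "?P (crit cM eps x)" "crit cM eps x \<le> K"
    unfolding crit_def by (rule LeastI, rule Least_le)
  then show "1 \<le> crit cM eps x" "(\<Sum>i\<in>UNIV. eps $ i * x $ i) \<le> (\<Sum>k=1..crit cM eps x. cM k)"
      "crit cM eps x \<le> K"
    by auto
  show "(\<Sum>k=1..j. cM k) < (\<Sum>i\<in>UNIV. eps $ i * x $ i)" if "1 \<le> j" "j < crit cM eps x"
    using not_less_Least[of j ?P] that unfolding crit_def by auto
qed

definition cost_branch :: "(nat \<Rightarrow> real) \<Rightarrow> (nat \<Rightarrow> real) \<Rightarrow> nat \<Rightarrow> real \<Rightarrow> real" where
  "cost_branch cM r j s = (\<Sum>k\<in>{1..<j}. (r k - r j) * cM k) + r j * s"

lemma cost_eq_cost_branch: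
  "cost cM r eps p x = cost_branch cM r (crit cM eps x) (\<Sum>i\<in>UNIV. eps $ i * x $ i) - p \<bullet> x"
  unfolding cost_def cost_branch_def Let_def inner_vec_def
  by (simp add: algebra_simps sum_subtractf sum_distrib_left)

lemma cost_branch_Suc_diff:
  assumes "1 \<le> j"
  shows "cost_branch cM r (Suc j) s - cost_branch cM r j s = (r (Suc j) - r j) * (s - (\<Sum>k=1..j. cM k))"
proof -
  have split: "(\<Sum>k\<in>{1..<j}. (r k - a) * cM k) = (\<Sum>k\<in>{1..<j}. r k * cM k) - a * (\<Sum>k\<in>{1..<j}. cM k)" for a
    by (simp add: sum_subtractf sum_distrib_left algebra_simps)
  have partial: "(\<Sum>k=1..j. cM k) = (\<Sum>k\<in>{1..<j}. cM k) + cM j"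
    using assms by (simp add: atLeastLessThanSuc_atLeastAtMost[symmetric] sum.atLeastLessThan_Suc)
  show ?thesis
    by (simp only: cost_branch_def sum.atLeastLessThan_Suc[OF assms] split partial) (simp add: algebra_simps)
qed

text \<open>As j grows, branch j increases while the capacity of the types below j is smaller than s,
  and decreases afterwards.\<close>

lemma cost_branch_le_crit:
  fixes eps x :: "real^'n"
  defines "s \<equiv> \<Sum>i\<in>UNIV. eps $ i * x $ i"
  assumes cM_nonneg: "\<And>k. k \<in> {1..K} \<Longrightarrow> 0 \<le> cM k"
    and r_mono: "\<And>k. k \<in> {1..<K} \<Longrightarrow> r k \<le> r (Suc k)"
    and K: "1 \<le> K" and s_le: "s \<le> (\<Sum>k=1..K. cM k)" and j: "j \<in> {1..K}"
  shows "cost_branch cM r j s \<le> cost_branch cM r (crit cM eps x) s"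
proof -
  define q where "q = crit cM eps x"
  note crit_facts = crit_ge_1 crit_le weighted_sum_le_crit crit_minimal
  note q_facts = crit_facts[OF K s_le[unfolded s_def], folded s_def q_def]
  have up: "cost_branch cM r n s \<le> cost_branch cM r (Suc n) s" if "n \<in> {1..<q}" for n
  proof -
    have "0 \<le> (r (Suc n) - r n) * (s - (\<Sum>k=1..n. cM k))"
    proof (intro mult_nonneg_nonneg)
      show "0 \<le> r (Suc n) - r n" using that q_facts(2) r_mono[of n] by simp
      show "0 \<le> s - (\<Sum>k=1..n. cM k)" using that q_facts(4)[of n] by simp
    qed
    then show ?thesis using cost_branch_Suc_diff[of n cM r s] that by simp
  qed
  have down: "cost_branch cM r (Suc n) s \<le> cost_branch cM r n s" if "n \<in> {q..<K}" for n
  proof -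
    have "(\<Sum>k=1..q. cM k) \<le> (\<Sum>k=1..n. cM k)"
      using that cM_nonneg by (intro sum_mono2) auto
    then have "(r (Suc n) - r n) * (s - (\<Sum>k=1..n. cM k)) \<le> 0"
      using that q_facts(1,3) r_mono[of n] by (intro mult_nonneg_nonpos) auto
    then show ?thesis using cost_branch_Suc_diff[of n cM r s] that q_facts(1) by simp
  qed
  show ?thesis
  proof (cases "j \<le> q")
    case True
    then show ?thesis
      unfolding q_def[symmetric]
      using lift_Suc_mono_le_ivl[where f = "\<lambda>n. cost_branch cM r n s" and N = "{1..<q}", OF up] j
      by auto
  next
    case False
    then show ?thesis
      unfolding q_def[symmetric]
      using lift_Suc_antimono_le_ivl[where f = "\<lambda>n. cost_branch cM r n s" and N = "{q..<K}", OF down] j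
      by auto
  qed
qed

lemma subgrad_inner:
  "subgrad cM r eps p y \<bullet> v = r (crit cM eps y) * (\<Sum>i\<in>UNIV. eps $ i * v $ i) - p \<bullet> v"
  by (simp add: subgrad_def inner_vec_def algebra_simps sum_subtractf sum_distrib_left)

lemma cost_subgradient:
  fixes x y eps p :: "real^'n"
  assumes cM_nonneg: "\<And>k. k \<in> {1..K} \<Longrightarrow> 0 \<le> cM k"
    and r_mono: "\<And>k. k \<in> {1..<K} \<Longrightarrow> r k \<le> r (Suc k)"
    and K: "1 \<le> K" and eps: "\<And>i. 0 \<le> eps $ i \<and> eps $ i \<le> 1"
    and x: "x \<in> feasible (\<Sum>k=1..K. cM k)" and y: "y \<in> feasible (\<Sum>k=1..K. cM k)"
  shows "cost cM r eps p y + subgrad cM r eps p y \<bullet> (x - y) \<le> cost cM r eps p x"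
proof -
  define sx where "sx = (\<Sum>i\<in>UNIV. eps $ i * x $ i)"
  define sy where "sy = (\<Sum>i\<in>UNIV. eps $ i * y $ i)"
  define q where "q = crit cM eps y"
  have sy_le: "sy \<le> (\<Sum>k=1..K. cM k)"
    unfolding sy_def using y eps by (rule feasible_weighted_sum_le)
  have q: "q \<in> {1..K}"
    unfolding q_def using crit_ge_1[OF K sy_le[unfolded sy_def]] crit_le[OF K sy_le[unfolded sy_def]] by simp
  have "cost cM r eps p y + subgrad cM r eps p y \<bullet> (x - y) = cost_branch cM r q sx - p \<bullet> x"
    by (simp add: cost_eq_cost_branch subgrad_inner cost_branch_def q_def sx_def sy_def
        inner_diff_right algebra_simps sum_subtractf)
  also have "\<dots> \<le> cost_branch cM r (crit cM eps x) sx - p \<bullet> x"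
    unfolding sx_def
    using cM_nonneg r_mono K feasible_weighted_sum_le[OF x eps] q
    by (intro diff_right_mono cost_branch_le_crit[where K = K])
  also have "\<dots> = cost cM r eps p x"
    by (simp add: cost_eq_cost_branch sx_def)
  finally show ?thesis .
qed

lemma norm_subgrad_le:
  fixes x eps p :: "real^'n"
  assumes K: "1 \<le> K" and x: "x \<in> feasible (\<Sum>k=1..K. cM k)"
    and r: "\<And>k. k \<in> {1..K} \<Longrightarrow> 0 \<le> r k \<and> r k \<le> rmax"
    and eps: "\<And>i. 0 \<le> eps $ i \<and> eps $ i \<le> 1"
    and p: "\<And>i. 0 \<le> p $ i \<and> p $ i \<le> pmax"
  shows "norm (subgrad cM r eps p x) \<le> sqrt CARD('n) * max rmax pmax"
proof (rule norm_le_sqrt_card_mult)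
  fix i
  define q where "q = crit cM eps x"
  have s_le: "(\<Sum>i\<in>UNIV. eps $ i * x $ i) \<le> (\<Sum>k=1..K. cM k)"
    using x eps by (rule feasible_weighted_sum_le)
  have "0 \<le> r q" "r q \<le> rmax"
    using r[of q] crit_ge_1[OF K s_le] crit_le[OF K s_le] by (auto simp: q_def)
  moreover have "0 \<le> r q * eps $ i" "r q * eps $ i \<le> r q"
    using \<open>0 \<le> r q\<close> eps[of i] by (simp_all add: mult_left_le)
  ultimately show "\<bar>subgrad cM r eps p x $ i\<bar> \<le> max rmax pmax"
    using eps[of i] p[of i] by (auto simp: subgrad_def q_def[symmetric] abs_le_iff le_max_iff_disj)
qed

theorem theorem5:
  fixes K T :: nat and cM :: "nat \<Rightarrow> real" and rmax pmax :: real
    and r :: "nat \<Rightarrow> nat \<Rightarrow> real"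
    and p eps :: "nat \<Rightarrow> real^'n"
    and c :: "nat \<Rightarrow> real^'n"
    and CM D G :: real
  defines "CM \<equiv> (\<Sum>k=1..K. cM k)"
    and "D \<equiv> (if CARD('n) = 1 then CM else sqrt 2 * CM)"
    and "G \<equiv> sqrt (real CARD('n)) * max rmax pmax"
  assumes K: "K \<ge> 1" and T: "T \<ge> 1"
    and cM_pos: "\<forall>k\<in>{1..K}. cM k > 0"
    and r_bd: "\<forall>t\<in>{1..T}. \<forall>k\<in>{1..K}. 0 \<le> r t k \<and> r t k \<le> rmax"
    and r_mono: "\<forall>t\<in>{1..T}. \<forall>k j. 1 \<le> k \<and> k < j \<and> j \<le> K \<longrightarrow> r t k < r t j"
    and p_bd: "\<forall>t\<in>{1..T}. \<forall>i. 0 \<le> p t $ i \<and> p t $ i < pmax"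
    and eps_bd: "\<forall>t\<in>{1..T}. \<forall>i. 0 \<le> eps t $ i \<and> eps t $ i \<le> 1"
    and c1: "c 1 \<in> feasible CM"
    and step: "\<forall>t\<in>{1..<T}. c (Suc t) = closest_point (feasible CM)
                 (c t - (D / (G * sqrt (real t))) *\<^sub>R subgrad cM (r t) (eps t) (p t) (c t))"
  shows "(\<Sum>t=1..T. cost cM (r t) (eps t) (p t) (c t))
           - (INF x\<in>feasible CM. \<Sum>t=1..T. cost cM (r t) (eps t) (p t) x)
           \<le> 3/2 * G * D * sqrt (real T)
       \<and> 3/2 * G * D * sqrt (real T) \<le> 3 * CM * sqrt (real T * real CARD('n) / 2) * max rmax pmax"
proof -
  have CM_pos: "0 < CM"
    unfolding CM_def using K cM_pos by (intro sum_pos) auto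
  have "0 < pmax"
    using p_bd T by (meson atLeastAtMost_iff le_less_trans order.refl)
  then have G_pos: "0 < G"
    unfolding G_def by simp
  have D_le: "D \<le> sqrt 2 * CM"
    unfolding D_def using CM_pos by (simp add: mult_le_cancel_right1)
  have nonempty: "feasible CM \<noteq> ({} :: (real^'n) set)"
    using c1 by blast
  have c_in: "c t \<in> feasible CM" if "t \<in> {1..T}" for t
    using closest_point_iterates_in[OF feasible_closed c1 step[rule_format] that] .
  have D_pos: "0 < D"
    unfolding D_def using CM_pos by simp
  have g_le: "norm (subgrad cM (r t) (eps t) (p t) (c t)) \<le> G" if "t \<in> {1..T}" for t
    unfolding G_def using K c_in[OF that] r_bd p_bd eps_bd that
    by (intro norm_subgrad_le) (auto simp: CM_def less_imp_le)
  have subgradient: "cost cM (r t) (eps t) (p t) (c t) + subgrad cM (r t) (eps t) (p t) (c t) \<bullet> (x - c t)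
      \<le> cost cM (r t) (eps t) (p t) x" if "t \<in> {1..T}" "x \<in> feasible CM" for t x
    using cost_subgradient[of K cM "r t" "eps t" x "c t" "p t"] K cM_pos r_mono eps_bd that c_in[OF that(1)]
    by (auto simp: CM_def less_imp_le)
  have diam: "dist y z \<le> D" if "y \<in> feasible CM" "z \<in> feasible CM" for y z :: "real^'n"
    unfolding D_def using that dist_feasible_le_CARD_1 dist_feasible_le_sqrt2 by auto
  have "(\<Sum>t=1..T. cost cM (r t) (eps t) (p t) (c t))
      - (INF x\<in>feasible CM. \<Sum>t=1..T. cost cM (r t) (eps t) (p t) x) \<le> 3/2 * G * D * sqrt T"
    by (rule projected_subgradient_descent_regret_le[where f = "\<lambda>t. cost cM (r t) (eps t) (p t)",
          OF feasible_convex feasible_closed nonempty G_pos D_pos T c_in g_le subgradient diam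
          step[rule_format]])
  moreover have "3/2 * G * D * sqrt T \<le> 3/2 * G * (sqrt 2 * CM) * sqrt T"
    using G_pos D_le by (intro mult_right_mono mult_left_mono) auto
  moreover have "3/2 * G * (sqrt 2 * CM) * sqrt T = 3 * CM * sqrt (real T * real CARD('n) / 2) * max rmax pmax"
    unfolding G_def by (simp add: real_sqrt_mult real_sqrt_divide field_simps)
  ultimately show ?thesis by linarith
qed

end
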